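(* If $(m,n)\in\mathcal{P}_\lambda$, then $(m+k,n)\in\mathcal{P}_\lambda$ and $(m,n+k)\in\mathcal{P}_\lambda$ for every $k\in\mathbb{Z}_+$. Likewise, if $(m,n)\in\overline{\mathcal{P}}_\lambda$, then $(m+k,n)\in\overline{\mathcal{P}}_\lambda$ and $(m,n+k)\in\overline{\mathcal{P}}_\lambda$ for every $k\in\mathbb{Z}_+$.
   Context: Fix $p\in(0,1)$, $q\in[0,1]$, $\lambda>0$. $\mathbb{Z}_+=\{0,1,2,\dots\}$. Let $d:[0,\infty)\to\mathbb{R}$ satisfy: (C1) $d(0)>0$; (C2) $d$ is convex and increasing; (C3) for every $\delta>0$, $r\mapsto d(r+\delta)-d(r)$ increases to $\infty$ as $r\to\infty$. Write $d(x,y):=d(\sqrt{x^2+y^2})$ for $(x,y)\in\mathbb{R}^2$ (so $d(1)=d(1,0)=d(0,1)$), and assume (C4): $d(x,y)$ is positive, twice continuously partially differentiable, with $d_{xx},d_{xy},d_{yy}>0$ for all $x,y\ge0$. Set $\Delta_1(m,n)=d(m+1,n)-d(m,n)$, $\Delta_2(m,n)=d(m,n+1)-d(m,n)$, $\Delta_q(m,n)=q\Delta_1(m,n)+(1-q)\Delta_2(m,n)$ for $(m,n)\in\mathbb{Z}_+^2$. Relay placement MDP: the state space is $\{(m,n,z):(m,n)\in\mathbb{Z}_+^2,\ z\in\{\mathsf e,\mathsf c\}\}\cup\{\phi\}$ ($(m,n)$ is the displacement of the deploying agent from the last placed relay, or from the origin if none; $z=\mathsf e$ means the lattice path has ended,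 $z=\mathsf c$ that it continues). Actions $u\in\{0,1\}$ ($u=1$: place a relay). From $(m,n,\mathsf c)$ with $u=0$ the next state is $(m+1,n,\mathsf c)$ w.p. $(1-p)q$, $(m+1,n,\mathsf e)$ w.p. $pq$, $(m,n+1,\mathsf c)$ w.p. $(1-p)(1-q)$, $(m,n+1,\mathsf e)$ w.p. $p(1-q)$; with $u=1$ it is $(1,0,\mathsf c)$, $(1,0,\mathsf e)$, $(0,1,\mathsf c)$, $(0,1,\mathsf e)$ with these same respective probabilities. At $(m,n,\mathsf e)$ only $u=1$ is allowed and the next state is the absorbing cost-free state $\phi$. One-step cost: $d(m,n)$ at $(m,n,\mathsf e)$; $\lambda+d(m,n)$ if $u=1$ at $(m,n,\mathsf c)$; $0$ otherwise. $J_\lambda(m,n)$ is the optimal expected total cost (infimum over all, possibly history-dependent and randomized, policies) starting from $(m,n,\mathsf c)$; it satisfies the Bellman equation $J_\lambda(m,n)=\min\{c_p(m,n),c_{np}(m,n)\}$, where $c_p(m,n)=\lambda+d(m,n)+(1-p)(1-q)J_\lambda(0,1)+(1-p)qJ_\lambda(1,0)+p\,d(1)$ and $c_{np}(m,n)=(1-p)qJ_\lambda(m+1,n)+(1-p)(1-q)J_\lambda(m,n+1)+pq\,d(m+1,n)+p(1-q)\,d(m,n+1)$. The optimal placement set is $\mathcal{P}_\lambda=\{(m,n)\in\mathbb{Z}_+^2: c_p(m,n)\le c_{np}(m,n)\}$. The one-step-look-ahead (OSLA) placement set is $\overline{\mathcal{P}}_\lambda=\{(m,n)\in\mathbb{Z}_+^2: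 p(\lambda+J_\lambda(0,0))\le \Delta_q(m,n)\}$. *)

theory Defs
  imports "HOL-Analysis.Analysis"
begin

definition dd :: "(real \<Rightarrow> real) \<Rightarrow> real \<Rightarrow> real \<Rightarrow> real" where
  "dd d x y = d (sqrt (x\<^sup>2 + y\<^sup>2))"

definition C1 :: "(real \<Rightarrow> real) \<Rightarrow> bool" where
  "C1 d \<longleftrightarrow> d 0 > 0"

definition C2 :: "(real \<Rightarrow> real) \<Rightarrow> bool" where
  "C2 d \<longleftrightarrow> convex_on {0..} d \<and> mono_on {0..} d"

definition C3 :: "(real \<Rightarrow> real) \<Rightarrow> bool" where
  "C3 d \<longleftrightarrow> (\<forall>\<delta>>0. mono_on {0..} (\<lambda>r. d (r + \<delta>) - d r) \<and>
                   filterlim (\<lambda>r. d (r + \<delta>) - d r) at_top at_top)"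

definition C4 :: "(real \<Rightarrow> real) \<Rightarrow> bool" where
  "C4 d \<longleftrightarrow> (\<forall>x\<ge>0. \<forall>y\<ge>0. dd d x y > 0) \<and>
    (\<exists>D1 D2 D11 D12 D21 D22 :: real \<Rightarrow> real \<Rightarrow> real.
      (\<forall>x y. ((\<lambda>t. dd d t y) has_real_derivative D1 x y) (at x)) \<and>
      (\<forall>x y. ((\<lambda>t. dd d x t) has_real_derivative D2 x y) (at y)) \<and>
      (\<forall>x y. ((\<lambda>t. D1 t y) has_real_derivative D11 x y) (at x)) \<and>
      (\<forall>x y. ((\<lambda>t. D1 x t) has_real_derivative D12 x y) (at y)) \<and>
      (\<forall>x y. ((\<lambda>t. D2 t y) has_real_derivative D21 x y) (at x)) \<and>
      (\<forall>x y. ((\<lambda>t. D2 x t) has_real_derivative D22 x y) (at y)) \<and>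
      continuous_on UNIV (\<lambda>(x,y). D11 x y) \<and> continuous_on UNIV (\<lambda>(x,y). D12 x y) \<and>
      continuous_on UNIV (\<lambda>(x,y). D21 x y) \<and> continuous_on UNIV (\<lambda>(x,y). D22 x y) \<and>
      (\<forall>x\<ge>0. \<forall>y\<ge>0. D11 x y > 0 \<and> D22 x y > 0) \<and>
      (\<forall>x>0. \<forall>y>0. D12 x y > 0))"

datatype st = Cont nat nat | Ende nat nat | Phi

text \<open>Successor distribution when the agent's displacement after the action is (a,b):
  list of (probability, next state).\<close>
definition trans :: "real \<Rightarrow> real \<Rightarrow> nat \<Rightarrow> nat \<Rightarrow> (real \<times> st) list" where
  "trans p q a b = [((1-p)*q, Cont (a+1) b), (p*q, Ende (a+1) b),
                    ((1-p)*(1-q), Cont a (b+1)), (p*(1-q), Ende a (b+1))]"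

text \<open>A (history-dependent, randomized) policy maps the current state and the past
  history (list of (state, action taken), most recent first; True = place relay) to
  the probability of placing a relay.\<close>
type_synonym policy = "st \<Rightarrow> (st \<times> bool) list \<Rightarrow> real"

definition policies :: "policy set" where
  "policies = {\<pi>. \<forall>s hs. 0 \<le> \<pi> s hs \<and> \<pi> s hs \<le> 1}"

text \<open>Expected cost incurred in the next k steps under policy \<pi>, from current state s
  with past history hs.\<close>
fun Wk :: "(real \<Rightarrow> real) \<Rightarrow> real \<Rightarrow> real \<Rightarrow> real \<Rightarrow> policy \<Rightarrow> nat \<Rightarrow> st \<Rightarrow> (st \<times> bool) list \<Rightarrow> real" where
  "Wk d p q l \<pi> 0 s hs = 0"
| "Wk d p q l \<pi> (Suc k) s hs =
     (case s of
        Phi \<Rightarrow> 0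
      | Ende m n \<Rightarrow> dd d (real m) (real n)
      | Cont m n \<Rightarrow>
          \<pi> s hs * (l + dd d (real m) (real n) +
              (\<Sum>(pr, s')\<leftarrow>trans p q 0 0. pr * Wk d p q l \<pi> k s' ((s, True) # hs)))
          + (1 - \<pi> s hs) *
              (\<Sum>(pr, s')\<leftarrow>trans p q m n. pr * Wk d p q l \<pi> k s' ((s, False) # hs)))"

definition total_cost :: "(real \<Rightarrow> real) \<Rightarrow> real \<Rightarrow> real \<Rightarrow> real \<Rightarrow> policy \<Rightarrow> st \<Rightarrow> ereal" where
  "total_cost d p q l \<pi> s = (SUP k. ereal (Wk d p q l \<pi> k s []))"

text \<open>Optimal expected total cost from (m,n,c) (finite, hence taken as a real).\<close>
definition Jopt :: "(real \<Rightarrow> real) \<Rightarrow> real \<Rightarrow> real \<Rightarrow> real \<Rightarrow> nat \<Rightarrow> nat \<Rightarrow> real" where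
  "Jopt d p q l m n = real_of_ereal (INF \<pi>\<in>policies. total_cost d p q l \<pi> (Cont m n))"

definition c_p :: "(real \<Rightarrow> real) \<Rightarrow> real \<Rightarrow> real \<Rightarrow> real \<Rightarrow> nat \<Rightarrow> nat \<Rightarrow> real" where
  "c_p d p q l m n = l + dd d (real m) (real n) + (1-p)*(1-q) * Jopt d p q l 0 1
      + (1-p)*q * Jopt d p q l 1 0 + p * d 1"

definition c_np :: "(real \<Rightarrow> real) \<Rightarrow> real \<Rightarrow> real \<Rightarrow> real \<Rightarrow> nat \<Rightarrow> nat \<Rightarrow> real" where
  "c_np d p q l m n = (1-p)*q * Jopt d p q l (m+1) n + (1-p)*(1-q) * Jopt d p q l m (n+1)
      + p*q * dd d (real (m+1)) (real n) + p*(1-q) * dd d (real m) (real (n+1))"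

definition Pset :: "(real \<Rightarrow> real) \<Rightarrow> real \<Rightarrow> real \<Rightarrow> real \<Rightarrow> (nat \<times> nat) set" where
  "Pset d p q l = {(m,n). c_p d p q l m n \<le> c_np d p q l m n}"

definition Delta1 :: "(real \<Rightarrow> real) \<Rightarrow> nat \<Rightarrow> nat \<Rightarrow> real" where
  "Delta1 d m n = dd d (real (m+1)) (real n) - dd d (real m) (real n)"

definition Delta2 :: "(real \<Rightarrow> real) \<Rightarrow> nat \<Rightarrow> nat \<Rightarrow> real" where
  "Delta2 d m n = dd d (real m) (real (n+1)) - dd d (real m) (real n)"

definition Deltaq :: "(real \<Rightarrow> real) \<Rightarrow> real \<Rightarrow> nat \<Rightarrow> nat \<Rightarrow> real" where
  "Deltaq d q m n = q * Delta1 d m n + (1-q) * Delta2 d m n"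

definition OSLAset :: "(real \<Rightarrow> real) \<Rightarrow> real \<Rightarrow> real \<Rightarrow> real \<Rightarrow> (nat \<times> nat) set" where
  "OSLAset d p q l = {(m,n). p * (l + Jopt d p q l 0 0) \<le> Deltaq d q m n}"

end

theory Submission
  imports Defs
begin

text \<open>
  Both sets are shown to be closed under arbitrary displacements (i,j), of which
  (k,0) and (0,k) are the cases stated in the theorem.

  For the OSLA set this is a purely geometric fact: by (C4) the increments
  Delta1, Delta2 of the cost d(x,y) increase in both coordinates.

  For the optimal set P the additional ingredient is the inequality
  J(a,b) + [d(a+i,b+j) - d(a,b)] <= J(a+i,b+j). It is proved by a coupling
  argument: any policy started at (a+i,b+j) is imitated by an agent started at
  (a,b) that follows the same lattice path and takes the same decisions. Until the
  first placement the shifted agent's states are translates of the imitator's, so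
  if the path ends first it pays at least the increment more; afterwards both
  agents coincide. Since the path ends before the first placement with probability
  tending to 1 along the finite-horizon costs, the total costs differ by at least
  the increment. Given this inequality, the Bellman comparison c_p <= c_np
  survives a displacement: c_p grows by exactly the increment and c_np by at
  least the increment.
\<close>

section \<open>Geometry of the cost function\<close>

text \<open>The two-dimensional cost depends only on the distance, hence is symmetric.\<close>
lemma dd_sym: "dd d x y = dd d y x"
  by (simp add: dd_def add.commute)

lemma increasing_from_deriv:
  fixes f f' :: "real \<Rightarrow> real"
  assumes "a \<le> b" and "\<And>x. (f has_real_derivative f' x) (at x)"
    and "\<And>x. a < x \<Longrightarrow> x < b \<Longrightarrow> 0 \<le> f' x"
  shows "f a \<le> f b"
proof (rule DERIV_nonneg_imp_increasing_open[OF assms(1)])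
  show "\<And>x. a < x \<Longrightarrow> x < b \<Longrightarrow> \<exists>y. DERIV f x :> y \<and> 0 \<le> y" using assms by blast
  show "continuous_on {a..b} f"
    using assms(2) by (intro continuous_at_imp_continuous_on ballI DERIV_isCont) blast
qed

text \<open>Supermodularity-type consequence of (C4): an increment of length h in the first
  coordinate grows when the base point moves up in either coordinate, because
  the first partial derivative increases in both arguments (d_xx > 0, d_xy > 0).\<close>
lemma dd_increment_mono:
  assumes "C4 d" and h: "0 \<le> h" and x: "0 \<le> x" "x \<le> x'" and y: "0 \<le> y" "y \<le> y'"
  shows "dd d (x+h) y - dd d x y \<le> dd d (x'+h) y' - dd d x' y'"
proof -
  obtain D1 D11 D12 :: "real \<Rightarrow> real \<Rightarrow> real" where
    D1: "\<And>x y. ((\<lambda>t. dd d t y) has_real_derivative D1 x y) (at x)" and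
    D11: "\<And>x y. ((\<lambda>t. D1 t y) has_real_derivative D11 x y) (at x)" and
    D12: "\<And>x y. ((\<lambda>t. D1 x t) has_real_derivative D12 x y) (at y)" and
    D11_pos: "\<And>x y. 0 \<le> x \<Longrightarrow> 0 \<le> y \<Longrightarrow> D11 x y > 0" and
    D12_pos: "\<And>x y. 0 < x \<Longrightarrow> 0 < y \<Longrightarrow> D12 x y > 0"
    using \<open>C4 d\<close> unfolding C4_def by metis
  have D1_mono_x: "D1 t y0 \<le> D1 t' y0" if "0 \<le> t" "t \<le> t'" "0 \<le> y0" for t t' y0
    using that D11_pos[of _ y0] by (intro increasing_from_deriv[OF _ D11]) (auto intro: less_imp_le)
  have D1_mono_y: "D1 x0 t \<le> D1 x0 t'" if "0 < x0" "0 \<le> t" "t \<le> t'" for x0 t t'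
    using that D12_pos[of x0] by (intro increasing_from_deriv[OF _ D12]) (auto intro: less_imp_le)
  have shift_x: "dd d (x+h) y - dd d x y \<le> dd d (x'+h) y - dd d x' y"
  proof (rule increasing_from_deriv[where f="\<lambda>t. dd d (t+h) y - dd d t y"])
    fix t
    have "((\<lambda>t. dd d (t+h) y) has_real_derivative D1 (t+h) y) (at t)"
      using DERIV_shift[of "\<lambda>t. dd d t y" "D1 (t+h) y" t h] D1 by simp
    then show "((\<lambda>t. dd d (t+h) y - dd d t y) has_real_derivative D1 (t+h) y - D1 t y) (at t)"
      by (intro DERIV_diff D1)
    assume "x < t" "t < x'"
    then show "0 \<le> D1 (t+h) y - D1 t y" using D1_mono_x[of t "t+h" y] h x y by simp
  qed fact
  have shift_y: "dd d x' y' - dd d x' y \<le> dd d (x'+h) y' - dd d (x'+h) y"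
  proof (rule increasing_from_deriv[where f="\<lambda>t. dd d t y' - dd d t y"])
    show "\<And>t. ((\<lambda>t. dd d t y' - dd d t y) has_real_derivative D1 t y' - D1 t y) (at t)"
      by (intro DERIV_diff D1)
    fix t assume "x' < t" "t < x'+h"
    then show "0 \<le> D1 t y' - D1 t y" using D1_mono_y[of t y y'] x y by simp
  qed (use h in simp)
  show ?thesis using shift_x shift_y by simp
qed

definition step_incr :: "(real \<Rightarrow> real) \<Rightarrow> nat \<Rightarrow> nat \<Rightarrow> nat \<Rightarrow> nat \<Rightarrow> real" where
  "step_incr d i j m n = dd d (real (m+i)) (real (n+j)) - dd d (real m) (real n)"

text \<open>Increments are monotone in the base point: split the step into its horizontal
  and vertical part and apply the previous lemma to each (using symmetry).\<close>
lemma step_incr_mono: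
  assumes "C4 d" "a \<le> m" "b \<le> n"
  shows "step_incr d i j a b \<le> step_incr d i j m n"
proof -
  have along_x: "dd d (real a + real i) (real b + real j) - dd d (real a) (real b + real j)
      \<le> dd d (real m + real i) (real n + real j) - dd d (real m) (real n + real j)"
    using assms by (intro dd_increment_mono) auto
  have along_y: "dd d (real b + real j) (real a) - dd d (real b) (real a)
      \<le> dd d (real n + real j) (real m) - dd d (real n) (real m)"
    using assms by (intro dd_increment_mono) auto
  show ?thesis using along_x along_y unfolding step_incr_def
    by (simp add: dd_sym[of d _ "real a"] dd_sym[of d _ "real m"])
qed

text \<open>By (C2) the cost grows with the distance, so increments are nonnegative.\<close>
lemma step_incr_nonneg:
  assumes "C2 d"
  shows "0 \<le> step_incr d i j m n"
proof -
  have "sqrt ((real m)\<^sup>2 + (real n)\<^sup>2) \<le> sqrt ((real (m+i))\<^sup>2 + (real (n+j))\<^sup>2)"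
    by (intro real_sqrt_le_mono add_mono power_mono) auto
  then show ?thesis
    using assms unfolding C2_def step_incr_def dd_def by (auto intro: mono_onD)
qed

lemma Deltaq_mono:
  assumes "C4 d" "0 \<le> q" "q \<le> 1" "a \<le> m" "b \<le> n"
  shows "Deltaq d q a b \<le> Deltaq d q m n"
proof -
  have "Delta1 d a b \<le> Delta1 d m n" "Delta2 d a b \<le> Delta2 d m n"
    using step_incr_mono[OF assms(1,4,5), of 1 0] step_incr_mono[OF assms(1,4,5), of 0 1]
    by (simp_all add: step_incr_def Delta1_def Delta2_def)
  then show ?thesis
    unfolding Deltaq_def using assms(2,3) by (intro add_mono mult_left_mono) auto
qed

section \<open>Finite-horizon costs\<close>

text \<open>Expected value of f over the random successor of displacement (a,b) when no relay
  is placed: one step right or up, the path continuing with probability 1-p.\<close>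
definition succ_avg :: "real \<Rightarrow> real \<Rightarrow> (st \<Rightarrow> real) \<Rightarrow> nat \<Rightarrow> nat \<Rightarrow> real" where
  "succ_avg p q f a b = (1-p)*q * f (Cont (a+1) b) + p*q * f (Ende (a+1) b)
     + (1-p)*(1-q) * f (Cont a (b+1)) + p*(1-q) * f (Ende a (b+1))"

lemma succ_avg_gap:
  assumes p: "0 \<le> p" "p \<le> 1" and q: "0 \<le> q" "q \<le> 1"
    and cont: "f (Cont (a+1) b) + e \<le> g (Cont (a'+1) b')" "f (Cont a (b+1)) + e \<le> g (Cont a' (b'+1))"
    and ende: "f (Ende (a+1) b) + e' \<le> g (Ende (a'+1) b')" "f (Ende a (b+1)) + e' \<le> g (Ende a' (b'+1))"
  shows "succ_avg p q f a b + ((1-p)*e + p*e') \<le> succ_avg p q g a' b'"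
proof -
  have w: "0 \<le> (1-p)*q" "0 \<le> p*q" "0 \<le> (1-p)*(1-q)" "0 \<le> p*(1-q)" using p q by auto
  have "succ_avg p q f a b + ((1-p)*e + p*e')
      = (1-p)*q * (f (Cont (a+1) b) + e) + p*q * (f (Ende (a+1) b) + e')
        + (1-p)*(1-q) * (f (Cont a (b+1)) + e) + p*(1-q) * (f (Ende a (b+1)) + e')"
    unfolding succ_avg_def by (simp add: algebra_simps)
  also have "\<dots> \<le> succ_avg p q g a' b'"
    unfolding succ_avg_def using w cont ende by (intro add_mono mult_left_mono) auto
  finally show ?thesis .
qed

lemma Wk_Cont_Suc:
  "Wk d p q l \<pi> (Suc k) (Cont m n) hs =
     \<pi> (Cont m n) hs * (l + dd d (real m) (real n)
        + succ_avg p q (\<lambda>s. Wk d p q l \<pi> k s ((Cont m n, True) # hs)) 0 0)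
   + (1 - \<pi> (Cont m n) hs) * succ_avg p q (\<lambda>s. Wk d p q l \<pi> k s ((Cont m n, False) # hs)) m n"
  by (simp add: trans_def succ_avg_def add.assoc)

lemma Wk_Ende: "Wk d p q l \<pi> k (Ende m n) hs = (if k = 0 then 0 else dd d (real m) (real n))"
  by (cases k) simp_all

text \<open>Costs are nonnegative, so the finite-horizon costs increase with the horizon and
  the total cost is their limit.\<close>
lemma Wk_mono_horizon:
  assumes \<pi>: "\<pi> \<in> policies" and p: "0 \<le> p" "p \<le> 1" and q: "0 \<le> q" "q \<le> 1" and l: "0 \<le> l"
    and dd_nonneg: "\<And>m n. 0 \<le> dd d (real m) (real n)"
  shows "Wk d p q l \<pi> k s hs \<le> Wk d p q l \<pi> (Suc k) s hs"
proof (induction k arbitrary: s hs)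
  case 0
  have "0 \<le> \<pi> s hs" using \<pi> by (auto simp: policies_def)
  then show ?case using dd_nonneg l by (cases s) (simp_all add: trans_def)
next
  case (Suc k)
  show ?case
  proof (cases s)
    case (Cont m n)
    let ?W = "\<lambda>k b s'. Wk d p q l \<pi> k s' ((Cont m n, b) # hs)"
    have "succ_avg p q (?W k b) a' b' + ((1-p)*0 + p*0) \<le> succ_avg p q (?W (Suc k) b) a' b'" for b a' b'
      by (intro succ_avg_gap p q) (simp_all only: add_0_right Suc.IH)
    moreover have "0 \<le> \<pi> s hs" "\<pi> s hs \<le> 1" using \<pi> by (auto simp: policies_def)
    ultimately show ?thesis
      unfolding Cont Wk_Cont_Suc by (intro add_mono mult_left_mono) auto
  qed simp_all
qed

text \<open>The policy placing a relay at every step has bounded cost; this shows that the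
  optimal cost is finite.\<close>
lemma Wk_always_place_bound:
  assumes p: "0 < p" "p \<le> 1" and q: "0 \<le> q" "q \<le> 1" and l: "0 \<le> l"
    and dd_nonneg: "\<And>m n. 0 \<le> dd d (real m) (real n)"
  shows "Wk d p q l (\<lambda>_ _. 1) k (Cont m n) hs \<le> dd d (real m) (real n) + (l + d 1) / p"
proof (induction k arbitrary: m n hs)
  case 0
  have "0 \<le> d 1" using dd_nonneg[of 1 0] by (simp add: dd_def)
  then show ?case using dd_nonneg[of m n] p l by simp
next
  case (Suc k)
  define C where "C = (l + d 1) / p"
  let ?W = "\<lambda>s. Wk d p q l (\<lambda>_ _. 1) k s ((Cont m n, True) # hs)"
  define bound :: "st \<Rightarrow> real" where "bound s = (case s of Cont _ _ \<Rightarrow> d 1 + C | _ \<Rightarrow> d 1)" for s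
  have d1: "dd d 1 0 = d 1" "dd d 0 1 = d 1" "0 \<le> d 1"
    using dd_nonneg[of 1 0] by (simp_all add: dd_def)
  have "succ_avg p q ?W 0 0 + ((1-p)*0 + p*0) \<le> succ_avg p q bound 0 0"
    using Suc.IH[of 1 0] Suc.IH[of 0 1] d1
    by (intro succ_avg_gap[OF less_imp_le[OF p(1)] p(2) q]) (auto simp: bound_def C_def Wk_Ende d1)
  also have "\<dots> = d 1 + (1-p) * C" unfolding succ_avg_def bound_def by (simp add: algebra_simps)
  finally have "Wk d p q l (\<lambda>_ _. 1) (Suc k) (Cont m n) hs \<le> l + dd d (real m) (real n) + (d 1 + (1-p) * C)"
    unfolding Wk_Cont_Suc by simp
  also have "\<dots> = dd d (real m) (real n) + C" using p by (simp add: C_def field_simps)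
  finally show ?case unfolding C_def .
qed

section \<open>The imitation coupling\<close>

definition relay_placed :: "(st \<times> bool) list \<Rightarrow> bool" where
  "relay_placed hs \<longleftrightarrow> (\<exists>x\<in>set hs. snd x)"

lemma relay_placed_simps [simp]:
  "\<not> relay_placed []"
  "relay_placed ((s, b) # hs) \<longleftrightarrow> b \<or> relay_placed hs"
  by (auto simp: relay_placed_def)

text \<open>Only the part of a history before the
  first placement is translated: after a placement both agents start afresh from
  the same relay and their states coincide.\<close>
definition shift_state :: "nat \<Rightarrow> nat \<Rightarrow> st \<Rightarrow> st" where
  "shift_state i j s = (case s of Cont m n \<Rightarrow> Cont (m+i) (n+j) | Ende m n \<Rightarrow> Ende (m+i) (n+j) | Phi \<Rightarrow> Phi)"

fun shift_history :: "nat \<Rightarrow> nat \<Rightarrow> (st \<times> bool) list \<Rightarrow> (st \<times> bool) list" where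
  "shift_history i j [] = []"
| "shift_history i j ((s, b) # hs) =
     (if relay_placed hs then s else shift_state i j s, b) # shift_history i j hs"

text \<open>The imitation policy: an agent started at (a,b) behaves as the policy sigma would
  behave for an agent started at (a+i,b+j), following the same path.\<close>
definition imitation :: "policy \<Rightarrow> nat \<Rightarrow> nat \<Rightarrow> policy" where
  "imitation \<sigma> i j = (\<lambda>s hs. \<sigma> (if relay_placed hs then s else shift_state i j s) (shift_history i j hs))"

lemma imitation_policy: "\<sigma> \<in> policies \<Longrightarrow> imitation \<sigma> i j \<in> policies"
  unfolding policies_def imitation_def by auto

lemma Wk_imitation_after_placement:
  "relay_placed hs \<Longrightarrow> Wk d p q l (imitation \<sigma> i j) k s hs = Wk d p q l \<sigma> k s (shift_history i j hs)"
proof (induction k arbitrary: s hs)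
  case (Suc k)
  then have "Wk d p q l (imitation \<sigma> i j) k s' ((s, b) # hs) = Wk d p q l \<sigma> k s' ((s, b) # shift_history i j hs)"
    for s' b by simp
  moreover have "imitation \<sigma> i j s hs = \<sigma> s (shift_history i j hs)"
    using Suc.prems by (simp add: imitation_def)
  ultimately show ?case by (cases s) (simp_all add: Wk_Cont_Suc)
qed simp

text \<open>One step of the coupling: both agents take the same action; a placement costs the
  shifted agent at least g more, and continuing transfers the gap of the successors.\<close>
lemma Wk_imitation_step:
  assumes \<sigma>: "\<sigma> \<in> policies" and fresh: "\<not> relay_placed hs"
    and now: "g \<le> step_incr d i j m n"
    and next_step: "succ_avg p q (\<lambda>s. Wk d p q l (imitation \<sigma> i j) k s ((Cont m n, False) # hs)) m n + g
      \<le> succ_avg p q (\<lambda>s. Wk d p q l \<sigma> k s ((Cont (m+i) (n+j), False) # shift_history i j hs)) (m+i) (n+j)"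
  shows "Wk d p q l (imitation \<sigma> i j) (Suc k) (Cont m n) hs + g
    \<le> Wk d p q l \<sigma> (Suc k) (Cont (m+i) (n+j)) (shift_history i j hs)"
proof -
  define x where "x = \<sigma> (Cont (m+i) (n+j)) (shift_history i j hs)"
  have x01: "0 \<le> x" "x \<le> 1" using \<sigma> by (auto simp: policies_def x_def)
  have same_action: "imitation \<sigma> i j (Cont m n) hs = x"
    using fresh by (simp add: imitation_def shift_state_def x_def)
  have same_after_placement:
    "Wk d p q l (imitation \<sigma> i j) k s ((Cont m n, True) # hs)
     = Wk d p q l \<sigma> k s ((Cont (m+i) (n+j), True) # shift_history i j hs)" for s
    using Wk_imitation_after_placement[of "(Cont m n, True) # hs"] fresh by (simp add: shift_state_def)
  have "0 \<le> x * (step_incr d i j m n - g)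
      + (1 - x) * (succ_avg p q (\<lambda>s. Wk d p q l \<sigma> k s ((Cont (m+i) (n+j), False) # shift_history i j hs)) (m+i) (n+j)
         - succ_avg p q (\<lambda>s. Wk d p q l (imitation \<sigma> i j) k s ((Cont m n, False) # hs)) m n - g)"
    using x01 now next_step by (intro add_nonneg_nonneg mult_nonneg_nonneg) auto
  then show ?thesis
    unfolding Wk_Cont_Suc same_action same_after_placement x_def[symmetric] step_incr_def
    by (simp add: algebra_simps)
qed

text \<open>By induction over the horizon, the shifted agent pays at least Delta more as soon as
  the path ends before any placement; this happens with probability tending to 1.\<close>
lemma Wk_imitation_gap:
  assumes \<sigma>: "\<sigma> \<in> policies" and p: "0 \<le> p" "p \<le> 1" and q: "0 \<le> q" "q \<le> 1"
    and \<Delta>: "0 \<le> \<Delta>" "\<And>m n. a \<le> m \<Longrightarrow> b \<le> n \<Longrightarrow> \<Delta> \<le> step_incr d i j m n"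
  shows "a \<le> m \<Longrightarrow> b \<le> n \<Longrightarrow> \<not> relay_placed hs \<Longrightarrow>
    Wk d p q l (imitation \<sigma> i j) (Suc k) (Cont m n) hs + \<Delta> * (1 - (1-p)^k)
    \<le> Wk d p q l \<sigma> (Suc k) (Cont (m+i) (n+j)) (shift_history i j hs)"
proof (induction k arbitrary: m n hs)
  case 0
  then have "0 \<le> step_incr d i j m n" using \<Delta> by fastforce
  with 0 show ?case by (intro Wk_imitation_step[OF \<sigma>]) (auto simp: succ_avg_def)
next
  case (Suc k)
  let ?g = "\<Delta> * (1 - (1-p)^Suc k)"
  have "?g \<le> \<Delta>" using \<Delta>(1) p by (simp add: mult_left_le)
  with \<Delta>(2) Suc.prems have now: "?g \<le> step_incr d i j m n" by fastforce
  have ende: "dd d (real m') (real n') + \<Delta> \<le> dd d (real (m'+i)) (real (n'+j))"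
    if "a \<le> m'" "b \<le> n'" for m' n'
    using \<Delta>(2)[OF that] by (simp add: step_incr_def)
  have "succ_avg p q (\<lambda>s. Wk d p q l (imitation \<sigma> i j) (Suc k) s ((Cont m n, False) # hs)) m n
      + ((1-p) * (\<Delta> * (1 - (1-p)^k)) + p * \<Delta>)
    \<le> succ_avg p q (\<lambda>s. Wk d p q l \<sigma> (Suc k) s ((Cont (m+i) (n+j), False) # shift_history i j hs)) (m+i) (n+j)"
    using Suc.IH[of "m+1" n "(Cont m n, False) # hs"] Suc.IH[of m "n+1" "(Cont m n, False) # hs"]
      ende[of "m+1" n] ende[of m "n+1"] Suc.prems
    by (intro succ_avg_gap p q) (simp_all add: shift_state_def Wk_Ende ac_simps)
  moreover have "(1-p) * (\<Delta> * (1 - (1-p)^k)) + p * \<Delta> = ?g" by (simp add: algebra_simps)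
  ultimately show ?case
    using Suc.prems by (intro Wk_imitation_step[OF \<sigma> _ now]) simp_all
qed

lemma total_cost_imitation_gap:
  assumes \<sigma>: "\<sigma> \<in> policies" and p: "0 < p" "p \<le> 1" and q: "0 \<le> q" "q \<le> 1" and l: "0 \<le> l"
    and dd_nonneg: "\<And>m n. 0 \<le> dd d (real m) (real n)"
    and \<Delta>: "0 \<le> \<Delta>" "\<And>m n. a \<le> m \<Longrightarrow> b \<le> n \<Longrightarrow> \<Delta> \<le> step_incr d i j m n"
  shows "total_cost d p q l (imitation \<sigma> i j) (Cont a b) + ereal \<Delta> \<le> total_cost d p q l \<sigma> (Cont (a+i) (b+j))"
proof -
  let ?V = "\<lambda>k. Wk d p q l (imitation \<sigma> i j) k (Cont a b) []"
  let ?W = "\<lambda>k. Wk d p q l \<sigma> k (Cont (a+i) (b+j)) []"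
  have V_mono: "incseq ?V"
    by (intro incseq_SucI Wk_mono_horizon[OF imitation_policy[OF \<sigma>] less_imp_le[OF p(1)] p(2) q l dd_nonneg])
  have gap: "?V (Suc k) + \<Delta> * (1 - (1-p)^k) \<le> ?W (Suc k)" for k
    using Wk_imitation_gap[OF \<sigma> less_imp_le[OF p(1)] p(2) q \<Delta>, where m=a and n=b and hs="[]" and k=k] by simp
  have below_sup: "ereal (?V k0 + \<Delta>) \<le> total_cost d p q l \<sigma> (Cont (a+i) (b+j))" for k0
  proof (rule LIMSEQ_le_const2)
    show "(\<lambda>k. ereal (?V k0 + \<Delta> * (1 - (1-p)^k))) \<longlonglongrightarrow> ereal (?V k0 + \<Delta>)"
      using LIMSEQ_power_zero[of "1-p"] p by (auto intro!: tendsto_eq_intros)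
    show "\<exists>N. \<forall>k\<ge>N. ereal (?V k0 + \<Delta> * (1 - (1-p)^k)) \<le> total_cost d p q l \<sigma> (Cont (a+i) (b+j))"
    proof (intro exI allI impI)
      fix k assume "k0 \<le> k"
      then have "?V k0 \<le> ?V (Suc k)" by (intro incseqD[OF V_mono]) simp
      then have "ereal (?V k0 + \<Delta> * (1 - (1-p)^k)) \<le> ereal (?W (Suc k))" using gap[of k] by simp
      also have "\<dots> \<le> total_cost d p q l \<sigma> (Cont (a+i) (b+j))"
        unfolding total_cost_def by (rule SUP_upper) simp
      finally show "ereal (?V k0 + \<Delta> * (1 - (1-p)^k)) \<le> total_cost d p q l \<sigma> (Cont (a+i) (b+j))" .
    qed
  qed
  have "total_cost d p q l (imitation \<sigma> i j) (Cont a b) + ereal \<Delta> = (SUP k. ereal (?V k) + ereal \<Delta>)"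
    unfolding total_cost_def by (rule SUP_ereal_add_left[symmetric]) auto
  also have "\<dots> \<le> total_cost d p q l \<sigma> (Cont (a+i) (b+j))" using below_sup by (intro SUP_least) simp
  finally show ?thesis .
qed

section \<open>The optimal cost and the placement sets\<close>

text \<open>The optimal cost is finite (between 0 and the cost of always placing).\<close>
lemma ereal_Jopt:
  assumes p: "0 < p" "p \<le> 1" and q: "0 \<le> q" "q \<le> 1" and l: "0 \<le> l"
    and dd_nonneg: "\<And>m n. 0 \<le> dd d (real m) (real n)"
  shows "ereal (Jopt d p q l m n) = (INF \<pi>\<in>policies. total_cost d p q l \<pi> (Cont m n))"
proof -
  let ?I = "INF \<pi>\<in>policies. total_cost d p q l \<pi> (Cont m n)"
  have "0 \<le> ?I"
  proof (rule INF_greatest)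
    fix \<pi> assume "\<pi> \<in> policies"
    have "ereal (Wk d p q l \<pi> 0 (Cont m n) []) \<le> total_cost d p q l \<pi> (Cont m n)"
      unfolding total_cost_def by (rule SUP_upper) simp
    then show "0 \<le> total_cost d p q l \<pi> (Cont m n)" by (simp add: zero_ereal_def)
  qed
  moreover have "?I \<le> ereal (dd d (real m) (real n) + (l + d 1) / p)"
  proof -
    have "?I \<le> total_cost d p q l (\<lambda>_ _. 1) (Cont m n)"
      by (rule INF_lower) (simp add: policies_def)
    also have "\<dots> \<le> ereal (dd d (real m) (real n) + (l + d 1) / p)"
      unfolding total_cost_def using Wk_always_place_bound[OF p q l dd_nonneg]
      by (intro SUP_least) simp
    finally show ?thesis .
  qed
  ultimately show ?thesis unfolding Jopt_def by (cases ?I) auto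
qed

text \<open>Key inequality: moving the start by (i,j) raises the optimal cost at least by the
  increment of d, since every policy from the shifted start is imitated from (a,b).\<close>
lemma Jopt_shift:
  assumes p: "0 < p" "p \<le> 1" and q: "0 \<le> q" "q \<le> 1" and l: "0 \<le> l" and "C2 d" "C4 d"
  shows "Jopt d p q l a b + step_incr d i j a b \<le> Jopt d p q l (a+i) (b+j)"
proof -
  have dd_nonneg: "0 \<le> dd d (real m) (real n)" for m n
    using \<open>C4 d\<close> unfolding C4_def by (auto intro: less_imp_le)
  note ereal_J = ereal_Jopt[OF p q l dd_nonneg]
  have "ereal (Jopt d p q l a b) + ereal (step_incr d i j a b) \<le> ereal (Jopt d p q l (a+i) (b+j))"
    unfolding ereal_J
  proof (rule INF_greatest)
    fix \<sigma> assume \<sigma>: "\<sigma> \<in> policies"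
    have "(INF \<pi>\<in>policies. total_cost d p q l \<pi> (Cont a b)) + ereal (step_incr d i j a b)
        \<le> total_cost d p q l (imitation \<sigma> i j) (Cont a b) + ereal (step_incr d i j a b)"
      by (intro add_right_mono INF_lower imitation_policy[OF \<sigma>])
    also have "\<dots> \<le> total_cost d p q l \<sigma> (Cont (a+i) (b+j))"
      using step_incr_nonneg[OF \<open>C2 d\<close>] step_incr_mono[OF \<open>C4 d\<close>]
      by (intro total_cost_imitation_gap[OF \<sigma> p q l dd_nonneg])
    finally show "(INF \<pi>\<in>policies. total_cost d p q l \<pi> (Cont a b)) + ereal (step_incr d i j a b)
        \<le> total_cost d p q l \<sigma> (Cont (a+i) (b+j))" .
  qed
  then show ?thesis by simp
qed

text \<open>The placement set is closed under displacements: placing gets more expensive by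
  exactly the increment, not placing by at least the increment.\<close>
lemma Pset_shift:
  assumes p: "0 < p" "p < 1" and q: "0 \<le> q" "q \<le> 1" and l: "0 < l" and "C2 d" "C4 d"
    and P: "(m, n) \<in> Pset d p q l"
  shows "(m+i, n+j) \<in> Pset d p q l"
proof -
  let ?J = "Jopt d p q l" and ?E = "step_incr d i j"
  define V where "V s = (case s of Cont a b \<Rightarrow> ?J a b | Ende a b \<Rightarrow> dd d (real a) (real b) | Phi \<Rightarrow> 0)" for s
  have c_np_avg: "c_np d p q l a b = succ_avg p q V a b" for a b
    unfolding c_np_def succ_avg_def V_def by (simp add: algebra_simps)
  have J_step: "?J a b + ?E m n \<le> ?J (a+i) (b+j)" if "m \<le> a" "n \<le> b" for a b
    using Jopt_shift[of p q l d a b i j] step_incr_mono[OF \<open>C4 d\<close> that, of i j] assms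
    by simp
  have dd_step: "dd d (real a) (real b) + ?E m n \<le> dd d (real (a+i)) (real (b+j))" if "m \<le> a" "n \<le> b" for a b
    using step_incr_mono[OF \<open>C4 d\<close> that, of i j] by (simp add: step_incr_def)
  have "c_np d p q l m n + ((1-p) * ?E m n + p * ?E m n) \<le> c_np d p q l (m+i) (n+j)"
    unfolding c_np_avg using p q J_step[of "m+1" n] J_step[of m "n+1"] dd_step[of "m+1" n] dd_step[of m "n+1"]
    by (intro succ_avg_gap) (auto simp: V_def ac_simps)
  moreover have "c_p d p q l (m+i) (n+j) = c_p d p q l m n + ?E m n"
    unfolding c_p_def step_incr_def by simp
  ultimately show ?thesis using P unfolding Pset_def by (simp add: algebra_simps)
qed

text \<open>The OSLA set is closed under displacements since its threshold quantity is monotone.\<close>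
lemma OSLAset_shift:
  assumes "0 \<le> q" "q \<le> 1" "C4 d" and "(m, n) \<in> OSLAset d p q l"
  shows "(m+i, n+j) \<in> OSLAset d p q l"
  using Deltaq_mono[of d q m "m+i" n "n+j"] assms unfolding OSLAset_def by auto

theorem mainTheorem10:
  fixes d :: "real \<Rightarrow> real" and p q l :: real and m n k :: nat
  assumes "0 < p" "p < 1" "0 \<le> q" "q \<le> 1" "l > 0"
    and "C1 d" "C2 d" "C3 d" "C4 d"
  shows "((m,n) \<in> Pset d p q l \<longrightarrow> (m+k,n) \<in> Pset d p q l \<and> (m,n+k) \<in> Pset d p q l)
       \<and> ((m,n) \<in> OSLAset d p q l \<longrightarrow> (m+k,n) \<in> OSLAset d p q l \<and> (m,n+k) \<in> OSLAset d p q l)"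
  using Pset_shift[OF assms(1-5,7,9), of m n k 0] Pset_shift[OF assms(1-5,7,9), of m n 0 k]
    OSLAset_shift[OF assms(3,4,9), of m n p l k 0] OSLAset_shift[OF assms(3,4,9), of m n p l 0 k]
  by simp

end
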